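(* Let $S>0$ and $\xi<0$, and define for $x>0$ \[ f(x)=N\!\left(\xi+\frac1S\ln x\right)-x^{-\frac{2\xi}{S}}N\!\left(\xi-\frac1S\ln x\right). \] Then there exists $\varepsilon>0$ such that $f(x)<0$ and $f'(x)<0$ for all $x\in(0,\varepsilon)$. Moreover, if $-S/2<\xi<0$ then $\lim_{x\to0^+}f'(x)=-\infty$; if $\xi=-S/2$ then $\lim_{x\to0^+}f'(x)=-1$; and if $\xi<-S/2$ then $\lim_{x\to0^+}f'(x)=0$.
   Context: $N(x)=\frac{1}{\sqrt{2\pi}}\int_{-\infty}^{x}e^{-s^2/2}\,ds$ is the standard normal distribution function. *)

theory Defs
  imports "HOL-Analysis.Analysis"
begin

definition N :: "real \<Rightarrow> real" where
  "N x = (1 / sqrt (2 * pi)) * (LBINT s:{..x}. exp (- (s\<^sup>2) / 2))"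

end

theory Submission
  imports Defs "HOL-Probability.Probability" "HOL-Real_Asymp.Real_Asymp"
begin

text \<open>Write \<open>a = -2\<xi>/S > 0\<close> and \<open>u = \<xi> - ln x / S\<close>, so \<open>u \<rightarrow> \<infinity>\<close> as \<open>x \<rightarrow> 0\<^sup>+\<close>.
  The Gaussian identity \<open>\<phi>(\<xi> + ln x / S) = x\<^sup>a \<phi>(\<xi> - ln x / S)\<close> collapses the derivative to
  \<open>f'(x) = (2/S) x\<^sup>a\<^sup>-\<^sup>1 (\<phi>(u) + \<xi> N(u))\<close>, whose bracket tends to \<open>\<xi> < 0\<close>.
  Hence \<open>f' < 0\<close> near \<open>0\<close>; since also \<open>f(x) \<rightarrow> 0\<close>, the decreasing function \<open>f\<close> is negative there,
  and the behaviour of \<open>f'\<close> is that of \<open>-a x\<^sup>a\<^sup>-\<^sup>1\<close>, whose exponent changes sign at \<open>\<xi> = -S/2\<close>.\<close>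

lemma N_eq_set_integral: "N x = (LBINT s:{..x}. std_normal_density s)"
  unfolding N_def std_normal_density_def by (simp add: set_integral_mult_right)

lemma set_integrable_std_normal_density:
  "A \<in> sets lborel \<Longrightarrow> set_integrable lborel A std_normal_density"
  unfolding set_integrable_def by (rule integrable_mult_indicator) auto

lemma set_borel_measurable_std_normal_density:
  "A \<in> sets lborel \<Longrightarrow> set_borel_measurable lborel A std_normal_density"
  using set_integrable_std_normal_density
  unfolding set_integrable_def set_borel_measurable_def by auto

lemma continuous_on_std_normal_density: "continuous_on A std_normal_density"
  unfolding std_normal_density_def by (intro continuous_intros) auto

lemma N_eq_add_set_integral:
  assumes "a \<le> x"
  shows "N x = N a + (LBINT s:{a..x}. std_normal_density s)"
proof -
  have split: "{..x} = {..a} \<union> {a<..x}" using assms by auto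
  have "N x = N a + (LBINT s:{a<..x}. std_normal_density s)"
    unfolding N_eq_set_integral split
    by (rule set_integral_Un) (auto intro: set_integrable_std_normal_density)
  also have "(LBINT s:{a<..x}. std_normal_density s) = (LBINT s:{a..x}. std_normal_density s)"
    by (rule set_integral_cong_set)
      (auto intro: set_borel_measurable_std_normal_density
        eventually_mono[OF AE_lborel_singleton[of a]])
  finally show ?thesis .
qed

lemma N_eq_add_integral:
  assumes "a \<le> x"
  shows "N x = N a + integral {a..x} std_normal_density"
  using N_eq_add_set_integral[OF assms]
    set_borel_integral_eq_integral(2)[OF set_integrable_std_normal_density[of "{a..x}"]]
  by simp

lemma N_has_real_derivative: "(N has_real_derivative std_normal_density x) (at x)"
proof -
  let ?F = "\<lambda>u. N (x - 1) + integral {x - 1..u} std_normal_density"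
  have "(?F has_real_derivative std_normal_density x) (at x within {x - 1..x + 1})"
    using integral_has_vector_derivative[OF continuous_on_std_normal_density, of x "x - 1" "x + 1"]
    by (auto simp: has_real_derivative_iff_has_vector_derivative intro!: derivative_eq_intros)
  then have F_deriv: "(?F has_real_derivative std_normal_density x) (at x)"
    by (subst (asm) at_within_interior) auto
  have "eventually (\<lambda>u. N u = ?F u) (nhds x)"
    by (rule eventually_mono[OF eventually_nhds_in_open[of "{x - 1<..}"]])
      (auto simp: N_eq_add_integral)
  from DERIV_cong_ev[OF refl this refl] F_deriv show ?thesis by simp
qed

lemma N_has_real_derivative_chain:
  "(g has_real_derivative g') (at x within A) \<Longrightarrow>
    ((\<lambda>x. N (g x)) has_real_derivative std_normal_density (g x) * g') (at x within A)"
  using DERIV_chain2[OF N_has_real_derivative] by blast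

lemma tendsto_N_at_top: "(N \<longlongrightarrow> 1) at_top"
proof -
  have "((\<lambda>b. N 0 + (LBINT s:{0..b}. std_normal_density s)) \<longlongrightarrow>
         N 0 + (LBINT s:{0..}. std_normal_density s)) at_top"
    by (intro tendsto_intros tendsto_set_lebesgue_integral_at_top
        set_integrable_std_normal_density) auto
  moreover have "N 0 + (LBINT s:{0..}. std_normal_density s) = 1"
  proof -
    have split: "(UNIV :: real set) = {..0} \<union> {0<..}" by auto
    have "N 0 + (LBINT s:{0<..}. std_normal_density s) = (LBINT s:UNIV. std_normal_density s)"
      unfolding N_eq_set_integral split
      by (rule set_integral_Un[symmetric]) (auto intro: set_integrable_std_normal_density)
    also have "\<dots> = 1" by (simp add: set_lebesgue_integral_def)
    also have "(LBINT s:{0<..}. std_normal_density s) = (LBINT s:{0..}. std_normal_density s)"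
      by (rule set_integral_cong_set)
        (auto intro: set_borel_measurable_std_normal_density
          eventually_mono[OF AE_lborel_singleton[of 0]])
    finally show ?thesis .
  qed
  moreover have "eventually (\<lambda>b. N 0 + (LBINT s:{0..b}. std_normal_density s) = N b) at_top"
    unfolding eventually_at_top_linorder by (auto simp: N_eq_add_set_integral intro!: exI[of _ 0])
  ultimately show ?thesis
    using Lim_transform_eventually by fastforce
qed

lemma tendsto_N_at_bot: "(N \<longlongrightarrow> 0) at_bot"
proof -
  have "((\<lambda>a. N 0 - (LBINT s:{a..0}. std_normal_density s)) \<longlongrightarrow>
         N 0 - (LBINT s:{..0}. std_normal_density s)) at_bot"
    by (intro tendsto_intros tendsto_set_lebesgue_integral_at_bot
        set_integrable_std_normal_density) auto
  moreover have "N 0 - (LBINT s:{..0}. std_normal_density s) = 0"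
    by (simp add: N_eq_set_integral)
  moreover have "eventually (\<lambda>a. N 0 - (LBINT s:{a..0}. std_normal_density s) = N a) at_bot"
    unfolding eventually_at_bot_linorder by (auto simp: N_eq_add_set_integral[of _ 0] intro!: exI[of _ 0])
  ultimately show ?thesis
    using Lim_transform_eventually by fastforce
qed

lemma std_normal_density_add_eq:
  "std_normal_density (\<xi> + t) = exp (- 2 * \<xi> * t) * std_normal_density (\<xi> - t)"
proof -
  have "exp (- (\<xi> + t)\<^sup>2 / 2) = exp (- 2 * \<xi> * t) * exp (- (\<xi> - t)\<^sup>2 / 2)"
    unfolding mult_exp_exp by (rule arg_cong[where f = exp]) (simp add: power2_eq_square field_simps)
  then show ?thesis
    unfolding std_normal_density_def by simp
qed

lemma less_tendsto_at_right_if_deriv_neg: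
  fixes g g' :: "real \<Rightarrow> real"
  assumes lim: "(g \<longlongrightarrow> l) (at_right a)"
    and deriv: "\<And>x. a < x \<Longrightarrow> x < b \<Longrightarrow> (g has_real_derivative g' x) (at x) \<and> g' x < 0"
    and x: "a < x" "x < b"
  shows "g x < l"
proof -
  have decreasing: "g z < g y" if "a < y" "y < z" "z < b" for y z
  proof (rule DERIV_neg_imp_decreasing_open[OF \<open>y < z\<close>])
    show "continuous_on {y..z} g"
    proof (intro continuous_at_imp_continuous_on ballI)
      fix w assume "w \<in> {y..z}"
      with that deriv[of w] show "isCont g w" by (auto intro: DERIV_isCont)
    qed
  next
    fix w assume "y < w" "w < z"
    with that deriv[of w] show "\<exists>D. (g has_real_derivative D) (at w) \<and> D < 0"
      by auto
  qed
  define y where "y = (a + x) / 2"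
  have "g y \<le> l"
  proof (rule tendsto_lowerbound[OF lim])
    show "eventually (\<lambda>z. g y \<le> g z) (at_right a)"
      unfolding eventually_at_right_field using x
      by (intro exI[of _ y]) (auto simp: y_def intro!: less_imp_le decreasing)
  qed simp
  moreover have "g x < g y"
    using x by (intro decreasing) (auto simp: y_def)
  ultimately show ?thesis by simp
qed

definition reflection_difference :: "real \<Rightarrow> real \<Rightarrow> real \<Rightarrow> real" where
  "reflection_difference S \<xi> x = N (\<xi> + ln x / S) - x powr (- 2 * \<xi> / S) * N (\<xi> - ln x / S)"

lemma reflection_difference_has_real_derivative:
  assumes "S > 0" "x > 0"
  shows "(reflection_difference S \<xi> has_real_derivative
      x powr (- 2 * \<xi> / S - 1) * (2 / S * (std_normal_density (\<xi> - ln x / S) + \<xi> * N (\<xi> - ln x / S))))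
      (at x)"
proof -
  define a where "a = - 2 * \<xi> / S"
  define u where "u = \<xi> - ln x / S"
  have "((\<lambda>x. \<xi> + ln x / S) has_real_derivative 1 / (S * x)) (at x)"
    and "((\<lambda>x. \<xi> - ln x / S) has_real_derivative - (1 / (S * x))) (at x)"
    using assms by (auto intro!: derivative_eq_intros)
  from DERIV_diff[OF N_has_real_derivative_chain[OF this(1)]
      DERIV_mult[OF has_real_derivative_powr[OF \<open>x > 0\<close>, of a] N_has_real_derivative_chain[OF this(2)]]]
  have "(reflection_difference S \<xi> has_real_derivative
      std_normal_density (\<xi> + ln x / S) * (1 / (S * x))
      - (a * x powr (a - 1) * N u + x powr a * (std_normal_density u * - (1 / (S * x))))) (at x)"
    unfolding reflection_difference_def a_def [symmetric] u_def by (simp add: ac_simps)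
  moreover have "std_normal_density (\<xi> + ln x / S) * (1 / (S * x))
      - (a * x powr (a - 1) * N u + x powr a * (std_normal_density u * - (1 / (S * x))))
      = x powr (a - 1) * (2 / S * (std_normal_density u + \<xi> * N u))"
  proof -
    have "std_normal_density (\<xi> + ln x / S) = x powr a * std_normal_density u"
      using assms by (simp add: std_normal_density_add_eq powr_def a_def u_def)
    moreover have "x powr a = x powr (a - 1) * x"
      using assms by (simp add: powr_diff)
    ultimately have "std_normal_density (\<xi> + ln x / S) * (1 / (S * x))
        - (a * x powr (a - 1) * N u + x powr a * (std_normal_density u * - (1 / (S * x))))
        = x powr (a - 1) * (2 / S * std_normal_density u - a * N u)"
      using assms by (simp add: field_simps)
    also have "\<dots> = x powr (a - 1) * (2 / S * (std_normal_density u + \<xi> * N u))"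
      using assms by (simp add: a_def field_simps)
    finally show ?thesis .
  qed
  ultimately show ?thesis
    by (simp add: a_def u_def)
qed

lemma tendsto_reflection_difference_at_right_0:
  assumes "S > 0" "\<xi> < 0"
  shows "(reflection_difference S \<xi> \<longlongrightarrow> 0) (at_right 0)"
proof -
  have "((\<lambda>x. N (\<xi> + ln x / S)) \<longlongrightarrow> 0) (at_right 0)"
    by (rule filterlim_compose[OF tendsto_N_at_bot]) (use assms in real_asymp)
  moreover have "((\<lambda>x. N (\<xi> - ln x / S)) \<longlongrightarrow> 1) (at_right 0)"
    by (rule filterlim_compose[OF tendsto_N_at_top]) (use assms in real_asymp)
  moreover have "- 2 * \<xi> / S > 0"
    using assms by (intro divide_pos_pos) auto
  then have "((\<lambda>x::real. x powr (- 2 * \<xi> / S)) \<longlongrightarrow> 0) (at_right 0)"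
    by real_asymp
  ultimately show ?thesis
    unfolding reflection_difference_def using tendsto_diff tendsto_mult by fastforce
qed

lemma tendsto_reflection_difference_deriv_factor:
  assumes "S > 0"
  shows "((\<lambda>x. 2 / S * (std_normal_density (\<xi> - ln x / S) + \<xi> * N (\<xi> - ln x / S)))
      \<longlongrightarrow> 2 * \<xi> / S) (at_right 0)"
proof -
  have u: "filterlim (\<lambda>x. \<xi> - ln x / S) at_top (at_right 0)"
    using assms by real_asymp
  have "(std_normal_density \<longlongrightarrow> 0) at_top"
    unfolding std_normal_density_def by real_asymp
  from tendsto_add[OF filterlim_compose[OF this u]
      tendsto_mult[OF tendsto_const filterlim_compose[OF tendsto_N_at_top u]]]
  have "((\<lambda>x. std_normal_density (\<xi> - ln x / S) + \<xi> * N (\<xi> - ln x / S)) \<longlongrightarrow> \<xi>) (at_right 0)"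
    by simp
  from tendsto_mult[OF tendsto_const[of "2 / S"] this] show ?thesis by simp
qed

lemma powr_mult_limits_at_right_0:
  fixes g h :: "real \<Rightarrow> real"
  assumes g: "\<forall>\<^sub>F x in at_right 0. g x = x powr p * h x"
    and h: "(h \<longlongrightarrow> c) (at_right 0)" and "c < 0"
  shows "(p < 0 \<longrightarrow> filterlim g at_bot (at_right 0))
    \<and> (p = 0 \<longrightarrow> (g \<longlongrightarrow> c) (at_right 0))
    \<and> (p > 0 \<longrightarrow> (g \<longlongrightarrow> 0) (at_right 0))"
proof (intro conjI impI)
  assume "p < 0"
  then have "filterlim (\<lambda>x::real. x powr p) at_top (at_right 0)"
    by real_asymp
  from filterlim_tendsto_neg_mult_at_bot[OF h \<open>c < 0\<close> this]
  show "filterlim g at_bot (at_right 0)"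
    by (simp add: filterlim_cong[OF refl refl g] mult.commute)
next
  assume "p = 0"
  have "\<forall>\<^sub>F x in at_right 0. g x = h x"
    using eventually_conj[OF g eventually_at_right_less]
    by (rule eventually_mono) (simp add: \<open>p = 0\<close>)
  with h show "(g \<longlongrightarrow> c) (at_right 0)"
    by (simp add: tendsto_cong)
next
  assume "p > 0"
  then have "((\<lambda>x::real. x powr p) \<longlongrightarrow> 0) (at_right 0)"
    by real_asymp
  from tendsto_mult[OF this h] show "(g \<longlongrightarrow> 0) (at_right 0)"
    by (simp add: tendsto_cong[OF g])
qed

theorem lemma1:
  fixes S \<xi> :: real and f :: "real \<Rightarrow> real"
  assumes S_pos: "S > 0" and xi_neg: "\<xi> < 0"
    and f_def: "\<And>x. x > 0 \<Longrightarrow>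
       f x = N (\<xi> + ln x / S) - x powr (- 2 * \<xi> / S) * N (\<xi> - ln x / S)"
  shows "(\<exists>\<epsilon>>0. \<forall>x\<in>{0<..<\<epsilon>}. f x < 0 \<and> deriv f x < 0)
    \<and> (- S / 2 < \<xi> \<longrightarrow> filterlim (deriv f) at_bot (at_right 0))
    \<and> (\<xi> = - S / 2 \<longrightarrow> (deriv f \<longlongrightarrow> -1) (at_right 0))
    \<and> (\<xi> < - S / 2 \<longrightarrow> (deriv f \<longlongrightarrow> 0) (at_right 0))"
proof -
  define p where "p = - 2 * \<xi> / S - 1"
  define h where "h x = 2 / S * (std_normal_density (\<xi> - ln x / S) + \<xi> * N (\<xi> - ln x / S))" for x
  have f_deriv: "(f has_real_derivative x powr p * h x) (at x)" if "x > 0" for x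
  proof -
    have "eventually (\<lambda>y. f y = reflection_difference S \<xi> y) (nhds x)"
      by (rule eventually_mono[OF eventually_nhds_in_open[of "{0<..}"]])
        (use that in \<open>auto simp: f_def reflection_difference_def\<close>)
    from DERIV_cong_ev[OF refl this refl] show ?thesis
      using reflection_difference_has_real_derivative[OF S_pos that] by (simp add: p_def h_def)
  qed
  have deriv_f: "\<forall>\<^sub>F x in at_right 0. deriv f x = x powr p * h x"
    using eventually_at_right_less by (rule eventually_mono) (simp add: f_deriv DERIV_imp_deriv)
  have h_lim: "(h \<longlongrightarrow> 2 * \<xi> / S) (at_right 0)" and "2 * \<xi> / S < 0"
    using tendsto_reflection_difference_deriv_factor[OF S_pos] S_pos xi_neg
    by (simp_all add: h_def [abs_def] divide_neg_pos)
  then obtain \<epsilon> where "\<epsilon> > 0" and h_neg: "\<And>x. 0 < x \<Longrightarrow> x < \<epsilon> \<Longrightarrow> h x < 0"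
    using order_tendstoD(2)[OF h_lim] unfolding eventually_at_right_field by blast
  have f_lim: "(f \<longlongrightarrow> 0) (at_right 0)"
    using tendsto_reflection_difference_at_right_0[OF S_pos xi_neg]
    by (rule Lim_transform_eventually)
      (auto simp: f_def reflection_difference_def intro: eventually_mono[OF eventually_at_right_less])
  have deriv_neg: "(f has_real_derivative x powr p * h x) (at x) \<and> x powr p * h x < 0"
    if "0 < x" "x < \<epsilon>" for x
    using f_deriv h_neg that by (simp add: mult_pos_neg)
  then have "f x < 0 \<and> deriv f x < 0" if "0 < x" "x < \<epsilon>" for x
    using less_tendsto_at_right_if_deriv_neg[OF f_lim deriv_neg that] deriv_neg[OF that]
    by (metis DERIV_imp_deriv)
  moreover have "- S / 2 < \<xi> \<longleftrightarrow> p < 0" "\<xi> < - S / 2 \<longleftrightarrow> p > 0"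
    and "\<xi> = - S / 2 \<longleftrightarrow> p = 0" "\<xi> = - S / 2 \<Longrightarrow> 2 * \<xi> / S = -1"
    using S_pos by (auto simp: p_def field_simps)
  ultimately show ?thesis
    using \<open>\<epsilon> > 0\<close> powr_mult_limits_at_right_0[OF deriv_f h_lim \<open>2 * \<xi> / S < 0\<close>] by auto
qed

end
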